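(* Assume the Continuum Hypothesis. If $\emptyset\neq U\subseteq\mathbb{R}$ and $\mathbb{R}\setminus U$ is uncountable, then there is a two-point selection $f$ on $\mathbb{R}$ such that $U\notin\tau_f$.
   Context: A two-point selection on $\mathbb{R}$ is a function $f$ from the set of two-element subsets of $\mathbb{R}$ to $\mathbb{R}$ with $f(F)\in F$. Write $r<_f s$ if $f(\{r,s\})=r$ ($r\ne s$), $(\leftarrow,r)_f=\{x: x<_f r\}$, $(r,\rightarrow)_f=\{x: r<_f x\}$. The topology $\tau_f$ on $\mathbb{R}$ is generated (as a subbase) by all sets $(\leftarrow,r)_f$, $(r,\rightarrow)_f$, $r\in\mathbb{R}$. *)

theory Defs
  imports "HOL-Analysis.Analysis" "HOL-Library.Equipollence"
begin

definition CH :: bool where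
  "CH \<longleftrightarrow> (\<forall>A :: real set. uncountable A \<longrightarrow> A \<approx> (UNIV :: real set))"

text \<open>Two-point selection on the reals (values on sets that are not two-element are irrelevant).\<close>
definition two_point_selection :: "(real set \<Rightarrow> real) \<Rightarrow> bool" where
  "two_point_selection f \<longleftrightarrow> (\<forall>r s. r \<noteq> s \<longrightarrow> f {r, s} \<in> {r, s})"

definition sel_less :: "(real set \<Rightarrow> real) \<Rightarrow> real \<Rightarrow> real \<Rightarrow> bool" where
  "sel_less f r s \<longleftrightarrow> r \<noteq> s \<and> f {r, s} = r"

definition sel_left_ray :: "(real set \<Rightarrow> real) \<Rightarrow> real \<Rightarrow> real set" where
  "sel_left_ray f r = {x. sel_less f x r}"

definition sel_right_ray :: "(real set \<Rightarrow> real) \<Rightarrow> real \<Rightarrow> real set" where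
  "sel_right_ray f r = {x. sel_less f r x}"

definition tau_sel :: "(real set \<Rightarrow> real) \<Rightarrow> real topology" where
  "tau_sel f = topology_generated_by (range (sel_left_ray f) \<union> range (sel_right_ray f))"

end

theory Submission
  imports Defs
begin

text \<open>Every injection \<open>K\<close> of the reals into a linear order induces a two-point selection
(pick the point with the smaller key) whose rays are the open rays of the order pulled back by
\<open>K\<close>. Pick \<open>u \<in> U\<close> and distinct points \<open>c n\<close> outside \<open>U\<close>, and choose \<open>K\<close> so that the keys of
the \<open>c n\<close> decrease to the key of \<open>u\<close> while every other point gets a key below that of \<open>u\<close>.
Every subbasic set containing \<open>u\<close> then contains almost all \<open>c n\<close>, hence so does every open
set; so \<open>U\<close> is not open.\<close>

lemma eventually_in_openin_topology_generated_by:
  assumes "openin (topology_generated_by \<S>) W" "u \<in> W"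
    and "\<And>S. S \<in> \<S> \<Longrightarrow> u \<in> S \<Longrightarrow> eventually (\<lambda>n. c n \<in> S) F"
  shows "eventually (\<lambda>n. c n \<in> W) F"
proof -
  let ?T = "\<lambda>W. u \<in> W \<longrightarrow> eventually (\<lambda>n. c n \<in> W) F"
  have "istopology ?T"
    unfolding istopology_def
  proof (intro conjI allI impI)
    fix S T assume "?T S" "?T T" "u \<in> S \<inter> T"
    then show "eventually (\<lambda>n. c n \<in> S \<inter> T) F"
      by (auto intro: eventually_conj)
  next
    fix \<K> assume "\<forall>K\<in>\<K>. ?T K" "u \<in> \<Union>\<K>"
    then obtain K where "K \<in> \<K>" "eventually (\<lambda>n. c n \<in> K) F"
      by blast
    then show "eventually (\<lambda>n. c n \<in> \<Union>\<K>) F"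
      by (auto elim: eventually_mono)
  qed
  moreover have "generate_topology_on \<S> W"
    using assms(1) by (rule openin_topology_generated_by)
  ultimately have "?T W"
    using assms(3) generate_topology_on_coarsest[of ?T \<S> W] by blast
  then show ?thesis
    using assms(2) by blast
qed

definition key_selection :: "(real \<Rightarrow> 'a::linorder) \<Rightarrow> real set \<Rightarrow> real" where
  "key_selection K A = arg_min K (\<lambda>x. x \<in> A)"

lemma key_selection_pair:
  assumes "inj K" "K r < K s"
  shows "key_selection K {r, s} = r"
  unfolding key_selection_def
  using assms by (intro arg_min_inj_eq) (auto intro: inj_on_subset)

lemma sel_less_key_selection:
  assumes "inj K"
  shows "sel_less (key_selection K) x y \<longleftrightarrow> K x < K y"
proof
  assume "sel_less (key_selection K) x y"
  then have "x \<noteq> y" "key_selection K {y, x} = x"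
    unfolding sel_less_def by (auto simp: insert_commute)
  then show "K x < K y"
    using assms key_selection_pair[of K y x] by (metis injD linorder_neqE)
qed (use assms key_selection_pair in \<open>auto simp: sel_less_def\<close>)

lemma two_point_selection_key_selection:
  assumes "inj K"
  shows "two_point_selection (key_selection K)"
  unfolding two_point_selection_def
  by (metis assms injD insertCI insert_commute key_selection_pair linorder_neqE)

lemma eventually_in_openin_tau_key_selection:
  assumes "inj K" "openin (tau_sel (key_selection K)) W" "u \<in> W"
    and above: "eventually (\<lambda>n. K u < K (c n)) F"
    and converge: "\<And>x. K u < K x \<Longrightarrow> eventually (\<lambda>n. K (c n) < K x) F"
  shows "eventually (\<lambda>n. c n \<in> W) F"
  using assms(2,3) unfolding tau_sel_def
proof (rule eventually_in_openin_topology_generated_by)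
  fix S assume "S \<in> range (sel_left_ray (key_selection K)) \<union> range (sel_right_ray (key_selection K))"
    and "u \<in> S"
  then consider r where "S = {x. K x < K r}" "K u < K r" | r where "S = {x. K r < K x}" "K r < K u"
    unfolding sel_left_ray_def sel_right_ray_def sel_less_key_selection[OF \<open>inj K\<close>] by blast
  then show "eventually (\<lambda>n. c n \<in> S) F"
  proof cases
    case 1
    then show ?thesis using converge by simp
  next
    case 2
    then show ?thesis using above by (auto elim: eventually_mono)
  qed
qed

lemma exists_key_accumulating:
  fixes c :: "nat \<Rightarrow> real"
  assumes "inj c" "\<And>n. c n \<noteq> u"
  obtains K :: "real \<Rightarrow> real" where "inj K" "\<And>n. K u < K (c n)"
    "\<And>x. K u < K x \<Longrightarrow> eventually (\<lambda>n. K (c n) < K x) sequentially"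
proof
  define K where "K x = (if x = u then 0 else if x \<in> range c then 1 / (real (inv c x) + 1)
    else - exp x)" for x
    \<comment> \<open>the points off \<open>u\<close> and \<open>c\<close> get negative keys, so they stay below \<open>u\<close>\<close>
  have K_c: "K (c n) = 1 / (real n + 1)" for n
    using assms by (simp add: K_def)
  have "1 / (real n + 1) \<noteq> - exp x" for x n
    by (smt (verit) exp_gt_zero divide_pos_pos of_nat_0_le_iff)
  then show "inj K"
    using assms by (intro injI) (auto simp: K_def inj_eq eq_commute[of "- exp _"] split: if_splits)
  show "K u < K (c n)" for n
    using K_c by (simp add: K_def)
  show "eventually (\<lambda>n. K (c n) < K x) sequentially" if above_u: "K u < K x" for x
  proof -
    obtain m where "x = c m"
      using above_u by (auto simp: K_def split: if_splits)
    then have "K (c n) < K x" if "n > m" for n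
      using that K_c by (simp add: frac_less2)
    with eventually_gt_at_top[of m] show ?thesis
      by (rule eventually_mono)
  qed
qed

lemma exists_selection_not_openin:
  fixes c :: "nat \<Rightarrow> real"
  assumes "u \<in> U" "inj c" "range c \<inter> U = {}"
  shows "\<exists>f. two_point_selection f \<and> \<not> openin (tau_sel f) U"
proof -
  have "c n \<noteq> u" for n
    using assms by auto
  with \<open>inj c\<close> obtain K :: "real \<Rightarrow> real" where K: "inj K" "\<And>n. K u < K (c n)"
    "\<And>x. K u < K x \<Longrightarrow> eventually (\<lambda>n. K (c n) < K x) sequentially"
    by (rule exists_key_accumulating) blast
  have "\<not> openin (tau_sel (key_selection K)) U"
  proof
    assume "openin (tau_sel (key_selection K)) U"
    with \<open>inj K\<close> have "eventually (\<lambda>n. c n \<in> U) sequentially"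
      using \<open>u \<in> U\<close> by (rule eventually_in_openin_tau_key_selection) (simp_all add: K)
    then show False
      using assms(3) by (auto simp: eventually_sequentially)
  qed
  then show ?thesis
    using two_point_selection_key_selection[OF \<open>inj K\<close>] by blast
qed

theorem corollary3p13:
  fixes U :: "real set"
  assumes "CH"
    and "U \<noteq> {}"
    and "uncountable (UNIV - U)"
  shows "\<exists>f. two_point_selection f \<and> \<not> openin (tau_sel f) U"
proof -
  obtain u where "u \<in> U"
    using assms(2) by blast
  have "infinite (UNIV - U)"
    using assms(3) countable_finite by blast
  then obtain c :: "nat \<Rightarrow> real" where "inj c" "range c \<subseteq> UNIV - U"
    using infinite_countable_subset by blast
  then have "range c \<inter> U = {}"
    by blast
  with \<open>u \<in> U\<close> \<open>inj c\<close> show ?thesis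
    by (rule exists_selection_not_openin)
qed

end
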